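(* Let $X,Y,F,\hat A,y,u^\dagger,\rho,\nu,L_F,L_{\hat A},u_0$ satisfy the hypotheses of the noise-free convergence theorem stated in the context, and let $\bar u$ be the limit of the noise-free iteration $(u_k)$ (so $F(\bar u)=y$). Let $\delta_n\to0$, $y_n\in Y$ with $\|y_n-y\|\le\delta_n$, and let $(u^{\delta_n}_k)_k$ be generated from $u^{\delta_n}_0=u_0$ by $$u^{\delta_n}_{k+1}=u^{\delta_n}_k-F'(u^{\delta_n}_k)^*(F(u^{\delta_n}_k)-y_n)-\lambda^{\delta_n}_k\hat A'(u^{\delta_n}_k)^*(\hat A(u^{\delta_n}_k)-y_n),$$ where the step parameters are given by $\lambda^{\delta_n}_k=\varphi_k(u^{\delta_n}_k,y_n)$ and $\lambda_k=\varphi_k(u_k,y)$ for functions $\varphi_k:X\times Y\to[0,\infty)$ continuous at the relevant points. Let $\tau>0$ with $C_\tau:=1-L_F^2-\nu-\frac{1+\nu}{\tau}\ge0$, and assume that for all $n$ and all $k<k_n$ the conditions $\lambda^{\delta_n}_kL_{\hat A}C^{\delta_n}_{\hat A}\le\rho$, $\lambda^{\delta_n}_k\le C_\lambda\|F(u^{\delta_n}_k)-y_n\|^2$ hold, with $C^{\delta_n}_{\hat A}:=L_{\hat A}\rho+\|\hat A(u^\dagger)\|+\|y_n\|$ and a constant $C_\lambda>0$ with $C_\tau-2L_{\hat A}C^{\delta_n}_{\hat A}C_\lambda\rho>0$ for all $n$. Let $k_n=k_*(\delta_n,y_n)$ be the stopping index of the discrepancy principle, i.e. the first index with $\|F(u^{\delta_n}_{k_n})-y_n\|\le\tau\delta_n$.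 Then $u^{\delta_n}_{k_n}\to\bar u$ as $n\to\infty$; i.e. the discrepancy-stopped iteration converges to a solution of $F(u)=y$ as $\delta\to0$.
   Context: $\mathcal{B}_\rho(v)$ denotes the closed ball of radius $\rho$ centred at $v$; $X,Y$ real Hilbert spaces; $^*$ the Hilbert adjoint. Noise-free convergence theorem hypotheses: $F(u^\dagger)=y$; there is $\rho>0$ with $\mathcal{B}_\rho(u^\dagger)\subseteq\mathcal{B}_{2\rho}(u_0)$, $\mathcal B_\rho(u^\dagger)\subseteq\mathcal D(F)\cap\mathcal D(\hat A)$, $u_0\in\mathcal B_\rho(u^\dagger)$; $\|F(u)-F(\tilde u)-F'(u)(u-\tilde u)\|\le\nu\|F(u)-F(\tilde u)\|$ for all $u,\tilde u\in\mathcal B_\rho(u^\dagger)$ with $\nu>0$; $F,\hat A$ continuously Fréchet differentiable on $\mathcal B_\rho(u^\dagger)$ with $\|F'(u)\|\le L_F$, $\|\hat A'(u)\|\le L_{\hat A}$ there; $\|\hat A(u^\dagger)-y\|\ge C_N>0$; the noise-free iteration $u_{k+1}=u_k-F'(u_k)^*(F(u_k)-y)-\lambda_k\hat A'(u_k)^*(\hat A(u_k)-y)$ has $\lambda_kL_{\hat A}C^0_{\hat A}\le\rho$, $\lambda_k\le C^0_\lambda\|F(u_k)-y\|^2$ for all $k$, where $C^0_{\hat A}=L_{\hat A}\rho+\|\hat A(u^\dagger)\|+\|y\|$ and $1-\nu-L_F^2-2L_{\hat A}C^0_{\hat A}C^0_\lambda\rho>0$. Under these hypotheses the noise-free iterates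 converge to some $\bar u$ with $F(\bar u)=y$. *)

theory Defs
  imports "HOL-Analysis.Analysis"
begin

end

theory Submission
  imports Defs
begin

text \<open>The noise-free iterates \<open>u\<^sub>k\<close> converge to a solution \<open>ubar\<close>, and for each fixed \<open>k\<close> the
  noisy iterate \<open>u\<^sup>\<delta>\<^sub>k\<close> depends continuously on the data, so it tends to \<open>u\<^sub>k\<close> as \<open>\<delta> \<rightarrow> 0\<close>.
  While the discrepancy principle has not stopped, the data error is dominated by the residual,
  and every noisy step is Fejer monotone with respect to each solution in the ball, in
  particular with respect to \<open>ubar\<close>. Given \<open>\<epsilon>\<close>, fix \<open>K\<close> with \<open>\<parallel>u\<^sub>K - ubar\<parallel> < \<epsilon>/2\<close>: if the
  stopping index is at least \<open>K\<close>, monotonicity bounds the error by \<open>\<parallel>u\<^sup>\<delta>\<^sub>K - ubar\<parallel>\<close>; if it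
  equals some \<open>j < K\<close> infinitely often, the residual at \<open>u\<^sub>j\<close> vanishes, the noise-free iteration
  is stationary from \<open>j\<close> on, and \<open>u\<^sub>j = ubar\<close>.

  Adjoints of bounded operators between Hilbert spaces come from the Riesz representation
  theorem, obtained by minimising \<open>\<parallel>v\<parallel>\<^sup>2/2 - g v\<close>.\<close>

lemma Cauchy_if_dist_sq_le:
  fixes v :: "nat \<Rightarrow> 'a::metric_space"
  assumes e: "e \<longlonglongrightarrow> 0" and le: "\<And>p q. (dist (v p) (v q))\<^sup>2 \<le> e p + e q"
  shows "Cauchy v"
proof (rule metric_CauchyI)
  fix \<epsilon> :: real assume "\<epsilon> > 0"
  then have "\<epsilon>\<^sup>2 / 2 > 0" by simp
  with e obtain M where M: "\<And>n. n \<ge> M \<Longrightarrow> e n < \<epsilon>\<^sup>2 / 2"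
    unfolding LIMSEQ_def by (metis dist_real_def abs_less_iff diff_zero)
  have "dist (v p) (v q) < \<epsilon>" if "p \<ge> M" "q \<ge> M" for p q
  proof -
    have "(dist (v p) (v q))\<^sup>2 < \<epsilon>\<^sup>2" using le[of p q] M[OF that(1)] M[OF that(2)] by linarith
    then show ?thesis using \<open>\<epsilon> > 0\<close> by (simp add: power_less_imp_less_base)
  qed
  then show "\<exists>M. \<forall>p\<ge>M. \<forall>q\<ge>M. dist (v p) (v q) < \<epsilon>" by blast
qed

text \<open>Minimising sequences are Cauchy by the parallelogram law.\<close>

lemma bounded_linear_functional_has_minimiser:
  fixes g :: "'a::{real_inner,complete_space} \<Rightarrow> real"
  assumes "bounded_linear g"
  shows "\<exists>v\<^sub>0. \<forall>v. v\<^sub>0 \<bullet> v\<^sub>0 / 2 - g v\<^sub>0 \<le> v \<bullet> v / 2 - g v"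
proof -
  interpret g: bounded_linear g by fact
  define J where "J v = v \<bullet> v / 2 - g v" for v
  obtain K where K: "\<And>x. norm (g x) \<le> norm x * K" using g.pos_bounded by blast
  have "J v \<ge> - K\<^sup>2 / 2" for v
  proof -
    have "g v \<le> norm v * K" using K[of v] by simp
    moreover have "(norm v - K)\<^sup>2 \<ge> 0" by simp
    ultimately show ?thesis
      unfolding J_def power2_norm_eq_inner[symmetric] by (simp add: power2_eq_square algebra_simps)
  qed
  then have bdd: "bdd_below (range J)" by (intro bdd_belowI2)
  define m where "m = Inf (range J)"
  have m_le: "m \<le> J x" for x unfolding m_def by (rule cInf_lower[OF _ bdd]) auto
  have "\<exists>v. J v < m + 1 / real (Suc n)" for n
    using cInf_less_iff[OF _ bdd, of "m + 1 / real (Suc n)"] unfolding m_def by auto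
  then obtain v where v: "\<And>n. J (v n) < m + 1 / real (Suc n)" by metis
  have "(dist (v p) (v q))\<^sup>2 \<le> 4 / real (Suc p) + 4 / real (Suc q)" for p q
  proof -
    have "(norm (v p - v q))\<^sup>2 / 4 = J (v p) + J (v q) - 2 * J ((1/2) *\<^sub>R (v p + v q))"
      unfolding J_def power2_norm_eq_inner
      by (simp add: g.add g.scaleR inner_diff_left inner_diff_right inner_add_left inner_add_right
            inner_commute algebra_simps field_simps)
    then show ?thesis using v[of p] v[of q] m_le[of "(1/2) *\<^sub>R (v p + v q)"]
      by (simp add: dist_norm)
  qed
  moreover have "(\<lambda>n. 4 / real (Suc n)) \<longlonglongrightarrow> 0"
    using LIMSEQ_Suc[OF lim_const_over_n] by simp
  ultimately have "Cauchy v" by (rule Cauchy_if_dist_sq_le[rotated])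
  then obtain v\<^sub>0 where lim: "v \<longlonglongrightarrow> v\<^sub>0" using Cauchy_convergent convergent_def by blast
  have "(\<lambda>n. J (v n)) \<longlonglongrightarrow> J v\<^sub>0"
    unfolding J_def by (auto intro!: tendsto_intros g.tendsto lim)
  moreover have "(\<lambda>n. J (v n)) \<longlonglongrightarrow> m"
  proof (rule tendsto_sandwich[of "\<lambda>n. m" _ _ "\<lambda>n. m + 1 / real (Suc n)"])
    show "\<forall>\<^sub>F n in sequentially. J (v n) \<le> m + 1 / real (Suc n)"
      using v less_imp_le by (intro always_eventually) blast
    show "(\<lambda>n. m + 1 / real (Suc n)) \<longlonglongrightarrow> m"
      using tendsto_add[OF tendsto_const LIMSEQ_Suc[OF lim_inverse_n']] by (simp add: inverse_eq_divide)
  qed (use m_le in auto)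
  ultimately have "J v\<^sub>0 = m" using LIMSEQ_unique by blast
  then show ?thesis using m_le unfolding J_def by auto
qed

lemma riesz_representation:
  fixes g :: "'a::{real_inner,complete_space} \<Rightarrow> real"
  assumes g: "bounded_linear g"
  shows "\<exists>v. \<forall>x. g x = v \<bullet> x"
proof -
  interpret g: bounded_linear g by fact
  obtain v\<^sub>0 where min: "\<And>v. v\<^sub>0 \<bullet> v\<^sub>0 / 2 - g v\<^sub>0 \<le> v \<bullet> v / 2 - g v"
    using bounded_linear_functional_has_minimiser[OF g] by blast
  have "g x = v\<^sub>0 \<bullet> x" for x
  proof -
    define c where "c = v\<^sub>0 \<bullet> x - g x"
    define s where "s = 1 / (x \<bullet> x + 1)"
    have "x \<bullet> x + 1 > 0" by (simp add: add_nonneg_pos)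
    then have s: "s > 0" "s * (x \<bullet> x) < 2" unfolding s_def by (simp_all add: field_simps)
    have "0 \<le> (v\<^sub>0 - (c * s) *\<^sub>R x) \<bullet> (v\<^sub>0 - (c * s) *\<^sub>R x) / 2 - g (v\<^sub>0 - (c * s) *\<^sub>R x)
                - (v\<^sub>0 \<bullet> v\<^sub>0 / 2 - g v\<^sub>0)"
      using min by simp
    also have "\<dots> = c\<^sup>2 * s * (s * (x \<bullet> x) / 2 - 1)"
      unfolding g.diff g.scaleR c_def by (simp add: inner_diff_left inner_diff_right inner_commute
          power2_eq_square algebra_simps field_simps)
    finally have "c\<^sup>2 * s \<le> 0" using s by (simp add: zero_le_mult_iff)
    then show ?thesis using s unfolding c_def by (simp add: mult_le_0_iff)
  qed
  then show ?thesis by blast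
qed

lemma inner_adjoint_bounded_linear:
  fixes f :: "'a::{real_inner,complete_space} \<Rightarrow> 'b::real_inner"
  assumes "bounded_linear f"
  shows "x \<bullet> adjoint f y = f x \<bullet> y"
proof -
  have "\<exists>w. \<forall>x. f x \<bullet> y = x \<bullet> w" for y
    using riesz_representation[OF bounded_linear_compose[OF bounded_linear_inner_left assms]]
    by (metis inner_commute)
  then have "\<exists>f'. \<forall>x y. f x \<bullet> y = x \<bullet> f' y" by metis
  then have "\<forall>x y. f x \<bullet> y = x \<bullet> adjoint f y" unfolding adjoint_def by (rule someI_ex)
  then show ?thesis by simp
qed

lemma inner_adjoint_blinfun:
  fixes T :: "'a::{real_inner,complete_space} \<Rightarrow>\<^sub>L 'b::real_inner"
  shows "x \<bullet> adjoint (blinfun_apply T) y = T x \<bullet> y"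
  by (rule inner_adjoint_bounded_linear) (rule blinfun.bounded_linear_right)

lemma inner_eq_imp_eq:
  fixes a b :: "'a::real_inner"
  assumes "\<And>x. x \<bullet> a = x \<bullet> b"
  shows "a = b"
proof -
  have "(a - b) \<bullet> (a - b) = 0" using assms[of "a - b"] by (simp add: inner_diff_right)
  then show ?thesis by simp
qed

lemma adjoint_blinfun_zero:
  fixes T :: "'a::{real_inner,complete_space} \<Rightarrow>\<^sub>L 'b::real_inner"
  shows "adjoint (blinfun_apply T) 0 = 0"
  by (rule inner_eq_imp_eq) (simp add: inner_adjoint_blinfun)

lemma norm_adjoint_blinfun_le:
  fixes T :: "'a::{real_inner,complete_space} \<Rightarrow>\<^sub>L 'b::real_inner"
  shows "norm (adjoint (blinfun_apply T) y) \<le> norm T * norm y"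
proof -
  let ?a = "adjoint (blinfun_apply T) y"
  have "(norm ?a)\<^sup>2 = T ?a \<bullet> y" by (simp add: power2_norm_eq_inner inner_adjoint_blinfun)
  also have "\<dots> \<le> norm (T ?a) * norm y" by (rule norm_cauchy_schwarz)
  also have "\<dots> \<le> norm T * norm ?a * norm y" by (simp add: mult_right_mono norm_blinfun)
  finally have "norm ?a * norm ?a \<le> (norm T * norm y) * norm ?a"
    by (simp add: power2_eq_square algebra_simps)
  then show ?thesis by (cases "norm ?a = 0") auto
qed

lemma bounded_bilinear_adjoint_blinfun:
  "bounded_bilinear
    (\<lambda>(T :: 'a::{real_inner,complete_space} \<Rightarrow>\<^sub>L 'b::real_inner) y. adjoint (blinfun_apply T) y)"
proof
  fix T T' :: "'a \<Rightarrow>\<^sub>L 'b" and y y' :: 'b and r :: real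
  show "adjoint (blinfun_apply (T + T')) y = adjoint (blinfun_apply T) y + adjoint (blinfun_apply T') y"
    by (rule inner_eq_imp_eq)
      (simp add: inner_adjoint_blinfun inner_add_right blinfun.add_left inner_add_left)
  show "adjoint (blinfun_apply T) (y + y') = adjoint (blinfun_apply T) y + adjoint (blinfun_apply T) y'"
    by (rule inner_eq_imp_eq) (simp add: inner_adjoint_blinfun inner_add_right)
  show "adjoint (blinfun_apply (r *\<^sub>R T)) y = r *\<^sub>R adjoint (blinfun_apply T) y"
    by (rule inner_eq_imp_eq) (simp add: inner_adjoint_blinfun blinfun.scaleR_left)
  show "adjoint (blinfun_apply T) (r *\<^sub>R y) = r *\<^sub>R adjoint (blinfun_apply T) y"
    by (rule inner_eq_imp_eq) (simp add: inner_adjoint_blinfun)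
next
  show "\<exists>K. \<forall>(T :: 'a \<Rightarrow>\<^sub>L 'b) y. norm (adjoint (blinfun_apply T) y) \<le> norm T * norm y * K"
    by (rule exI[of _ 1]) (simp add: norm_adjoint_blinfun_le)
qed

lemma inf_sequentially_principal_eq_bot_iff:
  "inf sequentially (principal S) = bot \<longleftrightarrow> finite (S :: nat set)"
  by (simp add: trivial_limit_def eventually_inf_principal cofinite_eq_sequentially[symmetric]
      eventually_cofinite)

locale penalised_landweber =
  fixes F Ahat :: "'a::{real_inner,complete_space} \<Rightarrow> 'b::{real_inner,complete_space}"
    and F' Ahat' :: "'a \<Rightarrow> ('a \<Rightarrow>\<^sub>L 'b)"
    and udag :: 'a and \<rho> \<nu> L_F L_A :: real
  assumes rho_pos: "\<rho> > 0"
    and nu_pos: "\<nu> > 0"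
    and tcc: "\<And>v w. v \<in> cball udag \<rho> \<Longrightarrow> w \<in> cball udag \<rho> \<Longrightarrow>
               norm (F v - F w - F' v (v - w)) \<le> \<nu> * norm (F v - F w)"
    and F_deriv: "\<And>v. v \<in> cball udag \<rho> \<Longrightarrow> (F has_derivative F' v) (at v within cball udag \<rho>)"
    and A_deriv: "\<And>v. v \<in> cball udag \<rho> \<Longrightarrow> (Ahat has_derivative Ahat' v) (at v within cball udag \<rho>)"
    and F'_cont: "continuous_on (cball udag \<rho>) F'"
    and A'_cont: "continuous_on (cball udag \<rho>) Ahat'"
    and F'_bound: "\<And>v. v \<in> cball udag \<rho> \<Longrightarrow> norm (F' v) \<le> L_F"
    and A'_bound: "\<And>v. v \<in> cball udag \<rho> \<Longrightarrow> norm (Ahat' v) \<le> L_A"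
begin

abbreviation B :: "'a set" where "B \<equiv> cball udag \<rho>"

definition C_A :: "'b \<Rightarrow> real" where "C_A z = L_A * \<rho> + norm (Ahat udag) + norm z"

definition C_tau :: "real \<Rightarrow> real" where "C_tau \<tau> = 1 - L_F\<^sup>2 - \<nu> - (1 + \<nu>) / \<tau>"

definition step :: "real \<Rightarrow> 'b \<Rightarrow> 'a \<Rightarrow> 'a" where
  "step lam z v = v - adjoint (blinfun_apply (F' v)) (F v - z)
                  - lam *\<^sub>R adjoint (blinfun_apply (Ahat' v)) (Ahat v - z)"

lemma udag_in_B: "udag \<in> B"
  using rho_pos by simp

lemma norm_minus_centre_le: "v \<in> B \<Longrightarrow> norm (v - udag) \<le> \<rho>"
  by (simp add: dist_norm norm_minus_commute)

lemma norm_diff_le_diameter: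
  assumes "v \<in> B" "w \<in> B"
  shows "norm (v - w) \<le> 2 * \<rho>"
  using norm_triangle_ineq4[of "v - udag" "w - udag"] norm_minus_centre_le[OF assms(1)]
    norm_minus_centre_le[OF assms(2)] by simp

lemma L_F_nonneg: "L_F \<ge> 0"
  using F'_bound[OF udag_in_B] norm_ge_zero order_trans by blast

lemma L_A_nonneg: "L_A \<ge> 0"
  using A'_bound[OF udag_in_B] norm_ge_zero order_trans by blast

lemma C_A_nonneg: "C_A z \<ge> 0"
  unfolding C_A_def using L_A_nonneg rho_pos by simp

lemma F_continuous_on: "continuous_on B F"
  by (rule has_derivative_continuous_on[OF F_deriv])

lemma Ahat_continuous_on: "continuous_on B Ahat"
  by (rule has_derivative_continuous_on[OF A_deriv])

lemma norm_Ahat_minus_le_C_A: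
  assumes "v \<in> B"
  shows "norm (Ahat v - z) \<le> C_A z"
proof -
  have "norm (Ahat v - Ahat udag) \<le> L_A * norm (v - udag)"
    using differentiable_bound[OF convex_cball A_deriv _ assms udag_in_B] A'_bound
    by (simp add: norm_blinfun.rep_eq)
  also have "\<dots> \<le> L_A * \<rho>" using norm_minus_centre_le[OF assms] L_A_nonneg by (rule mult_left_mono)
  finally show ?thesis
    using norm_triangle_ineq4[of "Ahat v" z] norm_triangle_sub[of "Ahat v" "Ahat udag"]
    unfolding C_A_def by linarith
qed

lemma tcc_lipschitz:
  assumes "v \<in> B" "w \<in> B"
  shows "(1 - \<nu>) * norm (F v - F w) \<le> L_F * norm (v - w)"
proof -
  have "norm (F' v (v - w)) \<le> L_F * norm (v - w)"
    using norm_blinfun[of "F' v" "v - w"] F'_bound[OF assms(1)]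
    by (meson mult_right_mono norm_ge_zero order_trans)
  then show ?thesis
    using tcc[OF assms] norm_triangle_sub[of "F v - F w" "F' v (v - w)"]
    by (simp add: algebra_simps)
qed

lemma landweber_step_estimate:
  assumes v: "v \<in> B" and uh: "uh \<in> B" and sol: "F uh = y"
  shows "(norm (v - adjoint (blinfun_apply (F' v)) (F v - z) - uh))\<^sup>2 \<le> (norm (v - uh))\<^sup>2
           - (2 - 2 * \<nu> - L_F\<^sup>2) * (norm (F v - z))\<^sup>2 + 2 * (1 + \<nu>) * norm (z - y) * norm (F v - z)"
proof -
  define r where "r = F v - z"
  define e where "e = v - uh"
  define a where "a = adjoint (blinfun_apply (F' v)) r"
  define \<eta> where "\<eta> = F v - F uh - F' v e"
  define R where "R = norm r"
  define d where "d = norm (z - y)"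
  have "norm a \<le> L_F * R"
    unfolding a_def R_def using norm_adjoint_blinfun_le[of "F' v" r] F'_bound[OF v]
    by (meson mult_right_mono norm_ge_zero order_trans)
  then have a_sq: "(norm a)\<^sup>2 \<le> L_F\<^sup>2 * R\<^sup>2"
    using power_mono[of "norm a" "L_F * R" 2] by (simp add: power_mult_distrib)
  have "norm \<eta> \<le> \<nu> * norm (F v - F uh)" unfolding \<eta>_def e_def using tcc[OF v uh] by simp
  also have "\<dots> \<le> \<nu> * (R + d)"
    using nu_pos norm_triangle_ineq[of r "z - y"] unfolding R_def d_def r_def sol
    by (intro mult_left_mono) (auto simp: algebra_simps)
  finally have "\<eta> \<bullet> r \<le> \<nu> * (R + d) * R"
    using norm_cauchy_schwarz[of \<eta> r] unfolding R_def by (meson mult_right_mono norm_ge_zero order_trans)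
  moreover have "(z - y) \<bullet> r \<ge> - (d * R)"
    unfolding d_def R_def using Cauchy_Schwarz_ineq2[of "z - y" r] by linarith
  moreover have "e \<bullet> a = R\<^sup>2 + (z - y) \<bullet> r - \<eta> \<bullet> r"
    \<comment> \<open>\<open>F' v e = r + (z - y) - \<eta>\<close>, since \<open>F uh = y\<close>\<close>
    unfolding a_def inner_adjoint_blinfun \<eta>_def r_def R_def sol
    by (simp add: inner_diff_left power2_norm_eq_inner)
  ultimately have ea: "e \<bullet> a \<ge> R\<^sup>2 - d * R - \<nu> * (R + d) * R" by linarith
  have "(norm (e - a))\<^sup>2 = (norm e)\<^sup>2 - 2 * (e \<bullet> a) + (norm a)\<^sup>2"
    by (simp add: power2_norm_eq_inner inner_diff_left inner_diff_right inner_commute)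
  also have "\<dots> \<le> (norm e)\<^sup>2 - 2 * (e \<bullet> a) + L_F\<^sup>2 * R\<^sup>2" using a_sq by simp
  also have "\<dots> \<le> (norm e)\<^sup>2 - 2 * (R\<^sup>2 - d * R - \<nu> * (R + d) * R) + L_F\<^sup>2 * R\<^sup>2"
    using ea by simp
  finally show ?thesis
    unfolding a_def e_def R_def d_def r_def by (simp add: power2_eq_square algebra_simps)
qed

lemma penalty_weight_le:
  assumes "lam \<le> C * r"
  shows "lam * L_A * C_A z \<le> L_A * C_A z * C * r"
  using mult_right_mono[OF assms, of "L_A * C_A z"] L_A_nonneg C_A_nonneg[of z] by (simp add: algebra_simps)

lemma norm_step_minus_le:
  assumes "v \<in> B" "lam \<ge> 0"
  shows "norm (step lam z v - uh)
           \<le> norm (v - adjoint (blinfun_apply (F' v)) (F v - z) - uh) + lam * L_A * C_A z"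
proof -
  have "norm (adjoint (blinfun_apply (Ahat' v)) (Ahat v - z)) \<le> L_A * C_A z"
    using norm_adjoint_blinfun_le[of "Ahat' v"] A'_bound[OF assms(1)] norm_Ahat_minus_le_C_A[OF assms(1)]
      L_A_nonneg by (meson mult_mono norm_ge_zero order_trans)
  then have "norm (lam *\<^sub>R adjoint (blinfun_apply (Ahat' v)) (Ahat v - z)) \<le> lam * L_A * C_A z"
    using assms(2) by (simp add: mult_left_mono mult.assoc)
  moreover have eq: "step lam z v - uh = (v - adjoint (blinfun_apply (F' v)) (F v - z) - uh)
                  - lam *\<^sub>R adjoint (blinfun_apply (Ahat' v)) (Ahat v - z)"
    unfolding step_def by simp
  ultimately show ?thesis
    unfolding eq using norm_triangle_ineq4[of "v - adjoint (blinfun_apply (F' v)) (F v - z) - uh"]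
    by (meson add_left_mono order_trans)
qed

lemma step_exact_descent:
  assumes v: "v \<in> B" and sol: "F udag = y" and lam: "lam \<ge> 0" "lam * L_A * C_A y \<le> \<rho>"
    and lam_le: "lam \<le> C0 * (norm (F v - y))\<^sup>2"
    and small: "\<nu> + L_F\<^sup>2 < 1" and const: "2 * L_A * C_A y * C0 * \<rho> < 1 - \<nu> - L_F\<^sup>2"
  shows "(norm (step lam y v - udag))\<^sup>2 \<le> (norm (v - udag))\<^sup>2 - ((1 - \<nu> - L_F\<^sup>2) / 2) * (norm (F v - y))\<^sup>2"
proof -
  define w where "w = v - adjoint (blinfun_apply (F' v)) (F v - y) - udag"
  define E where "E = norm (v - udag)"
  define R2 where "R2 = (norm (F v - y))\<^sup>2"
  define \<beta> where "\<beta> = lam * L_A * C_A y"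
  define m where "m = 1 - \<nu> - L_F\<^sup>2"
  have R2: "R2 \<ge> 0" and \<beta>: "0 \<le> \<beta>" "\<beta> \<le> \<rho>"
    unfolding R2_def \<beta>_def using lam L_A_nonneg C_A_nonneg by auto
  have W: "(norm w)\<^sup>2 \<le> E\<^sup>2 - (2 * m + L_F\<^sup>2) * R2"
    using landweber_step_estimate[OF v udag_in_B sol, of y] unfolding w_def E_def R2_def m_def
    by (simp add: algebra_simps)
  moreover have "(2 * m + L_F\<^sup>2) * R2 \<ge> 0"
    using small R2 unfolding m_def by (intro mult_nonneg_nonneg add_nonneg_nonneg) auto
  ultimately have "(norm w)\<^sup>2 \<le> E\<^sup>2" by linarith
  then have w_le: "norm w \<le> \<rho>"
    using norm_minus_centre_le[OF v] unfolding E_def by (meson norm_ge_zero order_trans power2_le_imp_le)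
  have \<rho>\<beta>: "\<rho> * \<beta> \<le> (m / 2) * R2"
  proof -
    have "\<beta> \<le> L_A * C_A y * C0 * R2" using penalty_weight_le[OF lam_le] unfolding \<beta>_def R2_def .
    then have "\<rho> * \<beta> \<le> (L_A * C_A y * C0 * \<rho>) * R2"
      using rho_pos by (simp add: algebra_simps)
    also have "\<dots> \<le> (m / 2) * R2"
      using const R2 unfolding m_def by (intro mult_right_mono) (simp_all add: mult.assoc)
    finally show ?thesis .
  qed
  have "norm (step lam y v - udag) \<le> norm w + \<beta>"
    using norm_step_minus_le[OF v lam(1)] unfolding w_def \<beta>_def .
  then have "(norm (step lam y v - udag))\<^sup>2 \<le> (norm w + \<beta>)\<^sup>2" by (simp add: power_mono)
  also have "\<dots> \<le> (norm w)\<^sup>2 + 3 * (\<rho> * \<beta>)"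
    using mult_right_mono[OF w_le \<beta>(1)] mult_right_mono[OF \<beta>(2) \<beta>(1)]
    by (simp add: power2_eq_square algebra_simps)
  also have "\<dots> \<le> E\<^sup>2 - (m / 2) * R2"
  proof -
    have "(norm w)\<^sup>2 \<le> E\<^sup>2 - 2 * (m * R2) - L_F\<^sup>2 * R2" using W by (simp add: algebra_simps)
    moreover have "L_F\<^sup>2 * R2 \<ge> 0" using R2 by simp
    ultimately show ?thesis using \<rho>\<beta> by simp
  qed
  finally show ?thesis unfolding E_def R2_def m_def .
qed

lemma C_tau_nonneg_consequences:
  assumes "\<tau> > 0" "C_tau \<tau> \<ge> 0"
  shows "\<nu> + L_F\<^sup>2 < 1" "1 < \<tau>" "C_tau \<tau> \<le> (1 - \<nu>) * (1 - 1 / \<tau>)"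
proof -
  have "(1 + \<nu>) / \<tau> > 0" using nu_pos assms(1) by simp
  then show small: "\<nu> + L_F\<^sup>2 < 1" using assms(2) unfolding C_tau_def by linarith
  have "(1 + \<nu>) / \<tau> < 1 + \<nu>"
    using assms(2) nu_pos zero_le_power2[of L_F] unfolding C_tau_def by linarith
  then have "(1 + \<nu>) * 1 < (1 + \<nu>) * \<tau>" using assms(1) by (simp add: field_simps)
  then show "1 < \<tau>" using nu_pos mult_less_cancel_left_pos[of "1 + \<nu>" 1 \<tau>] by simp
  have "(1 - \<nu>) * (1 - 1 / \<tau>) - C_tau \<tau> = L_F\<^sup>2 + 2 * (\<nu> / \<tau>)"
    unfolding C_tau_def using assms(1) by (simp add: field_simps)
  moreover have "\<nu> / \<tau> \<ge> 0" using nu_pos assms(1) by simp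
  ultimately show "C_tau \<tau> \<le> (1 - \<nu>) * (1 - 1 / \<tau>)" using zero_le_power2[of L_F] by linarith
qed

text \<open>Before the discrepancy principle stops, the data error is small against the residual,
  so the residual itself is controlled by the Lipschitz bound of \<open>F\<close> on \<open>B\<close>.\<close>

lemma residual_le_before_stopping:
  assumes v: "v \<in> B" and uh: "uh \<in> B" and sol: "F uh = y"
    and \<tau>: "\<tau> > 0" and \<nu>: "\<nu> < 1" and discr: "\<tau> * norm (z - y) < norm (F v - z)"
  shows "(1 - \<nu>) * (1 - 1 / \<tau>) * norm (F v - z) \<le> 2 * \<rho> * L_F"
proof -
  have "norm (F v - z) \<le> norm (F v - F uh) + norm (z - y)"
    using norm_triangle_ineq4[of "F v - F uh" "z - y"] unfolding sol by simp
  moreover have "norm (z - y) < norm (F v - z) / \<tau>" using discr \<tau> by (simp add: field_simps)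
  ultimately have "norm (F v - z) - norm (F v - z) / \<tau> \<le> norm (F v - F uh)" by linarith
  then have "(1 - \<nu>) * (norm (F v - z) - norm (F v - z) / \<tau>) \<le> (1 - \<nu>) * norm (F v - F uh)"
    using \<nu> by (intro mult_left_mono) auto
  then have "(1 - \<nu>) * (1 - 1 / \<tau>) * norm (F v - z) \<le> (1 - \<nu>) * norm (F v - F uh)"
    by (simp add: algebra_simps)
  also have "\<dots> \<le> L_F * norm (v - uh)" by (rule tcc_lipschitz[OF v uh])
  also have "\<dots> \<le> L_F * (2 * \<rho>)"
    using norm_diff_le_diameter[OF v uh] L_F_nonneg by (rule mult_left_mono)
  finally show ?thesis by (simp add: algebra_simps)
qed

lemma penalty_le_residual_before_stopping:
  assumes v: "v \<in> B" and uh: "uh \<in> B" and sol: "F uh = y"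
    and \<tau>: "\<tau> > 0" and discr: "\<tau> * norm (z - y) < norm (F v - z)"
    and lam_le: "lam \<le> C_lam * (norm (F v - z))\<^sup>2"
    and Ct: "C_tau \<tau> \<ge> 0" and const: "2 * L_A * C_A z * C_lam * \<rho> < C_tau \<tau>"
  shows "lam * L_A * C_A z \<le> L_F * norm (F v - z)"
proof -
  define R where "R = norm (F v - z)"
  define \<gamma> where "\<gamma> = L_A * C_A z * C_lam"
  define K where "K = (1 - \<nu>) * (1 - 1 / \<tau>)"
  note consequences = C_tau_nonneg_consequences[OF \<tau> Ct]
  have R: "R \<ge> 0" unfolding R_def by simp
  have \<beta>: "lam * L_A * C_A z \<le> (\<gamma> * R) * R"
    using penalty_weight_le[OF lam_le] unfolding \<gamma>_def R_def by (simp add: power2_eq_square mult.assoc)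
  have "\<gamma> * R \<le> L_F" if "\<gamma> > 0"
  proof -
    have "\<nu> < 1" using consequences(1) zero_le_power2[of L_F] by linarith
    moreover have "1 / \<tau> < 1" using consequences(2) by simp
    ultimately have K: "K > 0" unfolding K_def by simp
    have "K * (\<gamma> * R) = \<gamma> * (K * R)" by simp
    also have "\<dots> \<le> \<gamma> * (2 * \<rho> * L_F)"
      using residual_le_before_stopping[OF v uh sol \<tau> _ discr] consequences(1) zero_le_power2[of L_F] that
      unfolding K_def R_def by (intro mult_left_mono) auto
    also have "\<dots> = (2 * \<rho> * \<gamma>) * L_F" by simp
    also have "\<dots> \<le> K * L_F"
      using const consequences(3) L_F_nonneg unfolding \<gamma>_def K_def by (intro mult_right_mono) (auto simp: algebra_simps)
    finally show ?thesis using K by simp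
  qed
  then have "(\<gamma> * R) * R \<le> L_F * R"
  proof (cases "\<gamma> > 0")
    case False
    then have "(\<gamma> * R) * R \<le> 0" using R by (simp add: mult_nonpos_nonneg)
    moreover have "0 \<le> L_F * R" using R L_F_nonneg by simp
    ultimately show ?thesis by linarith
  qed (use R in \<open>auto intro: mult_right_mono\<close>)
  then show ?thesis using \<beta> unfolding R_def by linarith
qed

lemma landweber_step_estimate_before_stopping:
  assumes v: "v \<in> B" and uh: "uh \<in> B" and sol: "F uh = y"
    and \<tau>: "\<tau> > 0" and discr: "\<tau> * norm (z - y) < norm (F v - z)"
  shows "(norm (v - adjoint (blinfun_apply (F' v)) (F v - z) - uh))\<^sup>2 \<le> (norm (v - uh))\<^sup>2
           - 2 * (C_tau \<tau> * (norm (F v - z))\<^sup>2) - L_F\<^sup>2 * (norm (F v - z))\<^sup>2"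
proof -
  define R where "R = norm (F v - z)"
  define Q where "Q = (1 + \<nu>) / \<tau> * R\<^sup>2"
  have "2 * (1 + \<nu>) * norm (z - y) * R \<le> 2 * (1 + \<nu>) * (R / \<tau>) * R"
    using discr \<tau> nu_pos unfolding R_def
    by (intro mult_right_mono mult_left_mono) (auto simp: field_simps)
  also have "\<dots> = 2 * Q" unfolding Q_def by (simp add: power2_eq_square)
  finally have "2 * (1 + \<nu>) * norm (z - y) * R \<le> 2 * Q" .
  moreover have "(2 - 2 * \<nu> - L_F\<^sup>2) * R\<^sup>2 = 2 * (C_tau \<tau> * R\<^sup>2) + L_F\<^sup>2 * R\<^sup>2 + 2 * Q"
    unfolding Q_def C_tau_def by (simp add: algebra_simps)
  ultimately show ?thesis
    using landweber_step_estimate[OF v uh sol, of z] unfolding R_def by linarith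
qed

lemma step_noisy_fejer:
  assumes v: "v \<in> B" and uh: "uh \<in> B" and sol: "F uh = y" and lam: "lam \<ge> 0"
    and \<tau>: "\<tau> > 0" and discr: "\<tau> * norm (z - y) < norm (F v - z)"
    and lam_le: "lam \<le> C_lam * (norm (F v - z))\<^sup>2"
    and Ct: "C_tau \<tau> \<ge> 0" and const: "2 * L_A * C_A z * C_lam * \<rho> < C_tau \<tau>"
  shows "norm (step lam z v - uh) \<le> norm (v - uh)"
proof -
  define w where "w = v - adjoint (blinfun_apply (F' v)) (F v - z) - uh"
  define R where "R = norm (F v - z)"
  define E where "E = norm (v - uh)"
  define \<beta> where "\<beta> = lam * L_A * C_A z"
  define \<gamma> where "\<gamma> = L_A * C_A z * C_lam"
  have E: "E \<ge> 0" and \<beta>: "\<beta> \<ge> 0"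
    unfolding E_def \<beta>_def using lam L_A_nonneg C_A_nonneg by auto
  have W: "(norm w)\<^sup>2 \<le> E\<^sup>2 - 2 * (C_tau \<tau> * R\<^sup>2) - L_F\<^sup>2 * R\<^sup>2"
    using landweber_step_estimate_before_stopping[OF v uh sol \<tau> discr] unfolding w_def E_def R_def .
  have "C_tau \<tau> * R\<^sup>2 \<ge> 0" "L_F\<^sup>2 * R\<^sup>2 \<ge> 0" using Ct by simp_all
  then have "(norm w)\<^sup>2 \<le> E\<^sup>2" using W by linarith
  then have "norm w \<le> E" using E by (rule power2_le_imp_le)
  then have "norm w \<le> 2 * \<rho>" using norm_diff_le_diameter[OF v uh] unfolding E_def by linarith
  then have w\<beta>: "norm w * \<beta> \<le> 2 * (\<rho> * \<beta>)"
    using mult_right_mono[OF _ \<beta>, of "norm w" "2 * \<rho>"] by (simp add: algebra_simps)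
  have \<rho>\<beta>: "\<rho> * \<beta> \<le> \<rho> * \<gamma> * R\<^sup>2"
    using penalty_weight_le[OF lam_le] rho_pos unfolding \<beta>_def \<gamma>_def R_def
    by (simp add: mult_left_mono mult.assoc)
  have \<rho>\<gamma>: "2 * (\<rho> * \<gamma> * R\<^sup>2) \<le> C_tau \<tau> * R\<^sup>2"
  proof -
    have "2 * (\<rho> * \<gamma> * R\<^sup>2) = (2 * L_A * C_A z * C_lam * \<rho>) * R\<^sup>2"
      unfolding \<gamma>_def by (simp add: mult_ac)
    also have "\<dots> \<le> C_tau \<tau> * R\<^sup>2" using const by (intro mult_right_mono) simp_all
    finally show ?thesis .
  qed
  have \<beta>_sq: "\<beta>\<^sup>2 \<le> L_F\<^sup>2 * R\<^sup>2"
    using power_mono[OF penalty_le_residual_before_stopping[OF v uh sol \<tau> discr lam_le Ct const,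
          folded \<beta>_def R_def] \<beta>, of 2]
    by (simp add: power_mult_distrib)
  have "norm (step lam z v - uh) \<le> norm w + \<beta>"
    using norm_step_minus_le[OF v lam] unfolding w_def \<beta>_def .
  then have "(norm (step lam z v - uh))\<^sup>2 \<le> (norm w + \<beta>)\<^sup>2" by (rule power_mono) simp
  also have "\<dots> = (norm w)\<^sup>2 + \<beta>\<^sup>2 + 2 * (norm w * \<beta>)" by (simp add: power2_sum mult.assoc)
  also have "\<dots> \<le> (E\<^sup>2 - 2 * (C_tau \<tau> * R\<^sup>2) - L_F\<^sup>2 * R\<^sup>2) + L_F\<^sup>2 * R\<^sup>2 + 2 * (2 * (\<rho> * \<beta>))"
    by (intro add_mono W \<beta>_sq mult_left_mono[OF w\<beta>]) simp
  also have "\<dots> \<le> E\<^sup>2" using \<rho>\<beta> \<rho>\<gamma> by linarith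
  finally have "(norm (step lam z v - uh))\<^sup>2 \<le> E\<^sup>2" .
  then show ?thesis unfolding E_def by (rule power2_le_imp_le) simp
qed

lemma tendsto_step:
  assumes v: "(v \<longlongrightarrow> v\<^sub>0) G" "v\<^sub>0 \<in> B" "\<forall>\<^sub>F n in G. v n \<in> B"
    and z: "(z \<longlongrightarrow> z\<^sub>0) G" and l: "(l \<longlongrightarrow> l\<^sub>0) G"
  shows "((\<lambda>n. step (l n) (z n) (v n)) \<longlongrightarrow> step l\<^sub>0 z\<^sub>0 v\<^sub>0) G"
proof -
  note cont = continuous_on_tendsto_compose[OF F_continuous_on v]
    continuous_on_tendsto_compose[OF Ahat_continuous_on v]
    continuous_on_tendsto_compose[OF F'_cont v] continuous_on_tendsto_compose[OF A'_cont v]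
  show ?thesis
    unfolding step_def
    by (intro tendsto_diff tendsto_scaleR v(1) z l cont
        bounded_bilinear.tendsto[OF bounded_bilinear_adjoint_blinfun])
qed

lemma iterates_tendsto:
  assumes zs: "(zs \<longlongrightarrow> y) G"
    and u: "\<And>j. u (Suc j) = step (\<phi> j (u j) y) y (u j)" "\<And>j. u j \<in> B"
    and \<phi>: "\<And>j. continuous (at (u j, y)) (\<lambda>p. \<phi> j (fst p) (snd p))"
    and w0: "\<And>n. w n 0 = u 0"
    and ev: "\<forall>\<^sub>F n in G. \<forall>j<k. w n j \<in> B \<and> w n (Suc j) = step (\<phi> j (w n j) (zs n)) (zs n) (w n j)"
  shows "((\<lambda>n. w n k) \<longlongrightarrow> u k) G"
  using ev
proof (induction k)
  case (Suc k)
  have "\<forall>\<^sub>F n in G. \<forall>j<k. w n j \<in> B \<and> w n (Suc j) = step (\<phi> j (w n j) (zs n)) (zs n) (w n j)"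
    using Suc.prems by eventually_elim simp
  then have IH: "((\<lambda>n. w n k) \<longlongrightarrow> u k) G" by (rule Suc.IH)
  have "((\<lambda>n. \<phi> k (w n k) (zs n)) \<longlongrightarrow> \<phi> k (u k) y) G"
    using isCont_tendsto_compose[OF \<phi> tendsto_Pair[OF IH zs]] by simp
  then have "((\<lambda>n. step (\<phi> k (w n k) (zs n)) (zs n) (w n k)) \<longlongrightarrow> u (Suc k)) G"
    unfolding u(1) using Suc.prems by (intro tendsto_step IH u(2) zs) (auto elim: eventually_mono)
  moreover have "\<forall>\<^sub>F n in G. step (\<phi> k (w n k) (zs n)) (zs n) (w n k) = w n (Suc k)"
    using Suc.prems by eventually_elim simp
  ultimately show ?case by (rule Lim_transform_eventually)
qed (simp add: w0)

lemma solution_of_limit: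
  assumes "G \<noteq> bot" "(v \<longlongrightarrow> v\<^sub>0) G" "v\<^sub>0 \<in> B" "\<forall>\<^sub>F n in G. v n \<in> B"
    and "(z \<longlongrightarrow> y) G" "((\<lambda>n. F (v n) - z n) \<longlongrightarrow> 0) G"
  shows "F v\<^sub>0 = y"
proof -
  have "((\<lambda>n. F (v n) - z n) \<longlongrightarrow> F v\<^sub>0 - y) G"
    by (intro tendsto_diff continuous_on_tendsto_compose[OF F_continuous_on] assms(2-5))
  from tendsto_unique[OF assms(1) this assms(6)] show ?thesis by simp
qed

end

locale exact_iteration = penalised_landweber +
  fixes y :: 'b and u :: "nat \<Rightarrow> 'a" and lam :: "nat \<Rightarrow> real" and C0 :: real
  assumes sol: "F udag = y"
    and start: "u 0 \<in> cball udag \<rho>"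
    and iterate: "\<And>k. u (Suc k) = step (lam k) y (u k)"
    and lam_nonneg: "\<And>k. lam k \<ge> 0"
    and lam_le_rho: "\<And>k. lam k * L_A * C_A y \<le> \<rho>"
    and lam_le_residual: "\<And>k. lam k \<le> C0 * (norm (F (u k) - y))\<^sup>2"
    and small: "\<nu> + L_F\<^sup>2 < 1"
    and const: "2 * L_A * C_A y * C0 * \<rho> < 1 - \<nu> - L_F\<^sup>2"
begin

lemma iterate_descent:
  "u k \<in> B \<Longrightarrow> (norm (u (Suc k) - udag))\<^sup>2
     \<le> (norm (u k - udag))\<^sup>2 - ((1 - \<nu> - L_F\<^sup>2) / 2) * (norm (F (u k) - y))\<^sup>2"
  unfolding iterate by (rule step_exact_descent[OF _ sol lam_nonneg lam_le_rho lam_le_residual small const])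

lemma iterate_in_ball: "u k \<in> B"
proof (induction k)
  case (Suc k)
  have "((1 - \<nu> - L_F\<^sup>2) / 2) * (norm (F (u k) - y))\<^sup>2 \<ge> 0" using small by simp
  then have "(norm (u (Suc k) - udag))\<^sup>2 \<le> \<rho>\<^sup>2"
    using iterate_descent[OF Suc] power_mono[OF norm_minus_centre_le[OF Suc] norm_ge_zero, of 2] by linarith
  then have "norm (u (Suc k) - udag) \<le> \<rho>" by (rule power2_le_imp_le) (use rho_pos in simp)
  then show ?case by (simp add: dist_norm norm_minus_commute)
qed (use start in simp)

lemma residual_tendsto: "(\<lambda>k. F (u k)) \<longlonglongrightarrow> y"
proof -
  define c where "c = (1 - \<nu> - L_F\<^sup>2) / 2"
  have c: "c > 0" unfolding c_def using small by simp
  have telescope: "c * (\<Sum>k<N. (norm (F (u k) - y))\<^sup>2)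
      \<le> (norm (u 0 - udag))\<^sup>2 - (norm (u N - udag))\<^sup>2" for N
  proof (induction N)
    case (Suc N)
    have "c * (norm (F (u N) - y))\<^sup>2 \<le> (norm (u N - udag))\<^sup>2 - (norm (u (Suc N) - udag))\<^sup>2"
      using iterate_descent[OF iterate_in_ball, of N] unfolding c_def by linarith
    then show ?case using Suc.IH by (simp add: distrib_left)
  qed simp
  have "c * (\<Sum>k<N. (norm (F (u k) - y))\<^sup>2) \<le> (norm (u 0 - udag))\<^sup>2" for N
    using telescope[of N] zero_le_power2[of "norm (u N - udag)"] by linarith
  then have "(\<Sum>k<N. (norm (F (u k) - y))\<^sup>2) \<le> (norm (u 0 - udag))\<^sup>2 / c" for N
    using c by (simp add: field_simps mult.commute)
  then have "summable (\<lambda>k. (norm (F (u k) - y))\<^sup>2)" by (intro summableI_nonneg_bounded) auto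
  then have "(\<lambda>k. (norm (F (u k) - y))\<^sup>2) \<longlonglongrightarrow> 0" by (rule summable_LIMSEQ_zero)
  then have "(\<lambda>k. norm (F (u k) - y)) \<longlonglongrightarrow> 0"
    using tendsto_real_sqrt by fastforce
  then show ?thesis by (simp add: tendsto_norm_zero_iff LIM_zero_iff)
qed

text \<open>A vanishing residual forces a vanishing step size, so the iteration stops moving.\<close>

lemma iterate_stationary:
  assumes "F (u j) = y"
  shows "u (i + j) = u j"
proof (induction i)
  case (Suc i)
  then have "F (u (i + j)) = y" using assms by simp
  moreover from this have "lam (i + j) = 0" using lam_le_residual[of "i + j"] lam_nonneg[of "i + j"] by simp
  ultimately show ?case using Suc iterate[of "i + j"] by (simp add: step_def adjoint_blinfun_zero)
qed simp

lemma limit_in_ball: "u \<longlonglongrightarrow> ubar \<Longrightarrow> ubar \<in> B"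
  using iterate_in_ball by (intro Lim_in_closed_set[OF closed_cball]) auto

lemma limit_solves:
  assumes "u \<longlonglongrightarrow> ubar"
  shows "F ubar = y"
proof -
  have "(\<lambda>k. F (u k)) \<longlonglongrightarrow> F ubar"
    using continuous_on_tendsto_compose[OF F_continuous_on assms limit_in_ball[OF assms]] iterate_in_ball
    by simp
  then show ?thesis using residual_tendsto LIMSEQ_unique by blast
qed

lemma solving_iterate_eq_limit:
  assumes "u \<longlonglongrightarrow> ubar" "F (u j) = y"
  shows "u j = ubar"
proof -
  have "(\<lambda>i. u (i + j)) \<longlonglongrightarrow> u j" using iterate_stationary[OF assms(2)] by simp
  then show ?thesis using LIMSEQ_ignore_initial_segment[OF assms(1), of j] LIMSEQ_unique by blast
qed

end

locale noisy_iterations = penalised_landweber +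
  fixes y :: 'b and yn :: "nat \<Rightarrow> 'b" and \<delta> :: "nat \<Rightarrow> real" and ud :: "nat \<Rightarrow> nat \<Rightarrow> 'a"
    and lam :: "nat \<Rightarrow> nat \<Rightarrow> real" and kn :: "nat \<Rightarrow> nat" and \<tau> C_lam :: real
  assumes sol: "F udag = y"
    and start: "\<And>n. ud n 0 \<in> cball udag \<rho>"
    and iterate: "\<And>n k. k < kn n \<Longrightarrow> ud n (Suc k) = step (lam n k) (yn n) (ud n k)"
    and lam_nonneg: "\<And>n k. lam n k \<ge> 0"
    and lam_le_residual: "\<And>n k. k < kn n \<Longrightarrow> lam n k \<le> C_lam * (norm (F (ud n k) - yn n))\<^sup>2"
    and data_error: "\<And>n. norm (yn n - y) \<le> \<delta> n"
    and discrepancy: "\<And>n k. k < kn n \<Longrightarrow> \<tau> * \<delta> n < norm (F (ud n k) - yn n)"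
    and stop: "\<And>n. norm (F (ud n (kn n)) - yn n) \<le> \<tau> * \<delta> n"
    and tau_pos: "\<tau> > 0"
    and C_tau_nonneg: "C_tau \<tau> \<ge> 0"
    and const: "\<And>n. 2 * L_A * C_A (yn n) * C_lam * \<rho> < C_tau \<tau>"
begin

lemma noisy_step_fejer:
  assumes "k < kn n" "ud n k \<in> B" "uh \<in> B" "F uh = y"
  shows "norm (ud n (Suc k) - uh) \<le> norm (ud n k - uh)"
proof -
  have "\<tau> * norm (yn n - y) \<le> \<tau> * \<delta> n" using data_error tau_pos by simp
  then have "\<tau> * norm (yn n - y) < norm (F (ud n k) - yn n)"
    using discrepancy[OF assms(1)] by linarith
  then show ?thesis
    unfolding iterate[OF assms(1)]
    by (rule step_noisy_fejer[OF assms(2-4) lam_nonneg tau_pos _ lam_le_residual[OF assms(1)] C_tau_nonneg const])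
qed

lemma noisy_iterate_in_ball: "k \<le> kn n \<Longrightarrow> ud n k \<in> B"
proof (induction k)
  case (Suc k)
  then have "norm (ud n (Suc k) - udag) \<le> norm (ud n k - udag)"
    by (intro noisy_step_fejer udag_in_B sol) auto
  also have "\<dots> \<le> \<rho>" using Suc by (intro norm_minus_centre_le) auto
  finally show ?case by (simp add: dist_norm norm_minus_commute)
qed (use start in simp)

lemma noisy_iterate_fejer:
  assumes "uh \<in> B" "F uh = y" "j \<le> k" "k \<le> kn n"
  shows "norm (ud n k - uh) \<le> norm (ud n j - uh)"
  using assms(3,4)
proof (induction k rule: dec_induct)
  case (step m)
  then have "norm (ud n (Suc m) - uh) \<le> norm (ud n m - uh)"
    by (intro noisy_step_fejer noisy_iterate_in_ball assms(1,2)) auto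
  with step show ?case by simp
qed simp

lemma data_tendsto: "\<delta> \<longlonglongrightarrow> 0 \<Longrightarrow> yn \<longlonglongrightarrow> y"
  using Lim_null_comparison[of "\<lambda>n. yn n - y" \<delta>] data_error by (simp add: LIM_zero_iff)

lemma iterate_tendsto_exact_iterate:
  assumes \<delta>: "\<delta> \<longlonglongrightarrow> 0" and G: "G \<le> sequentially" "\<forall>\<^sub>F n in G. k \<le> kn n"
    and lam: "\<And>n k. lam n k = \<phi> k (ud n k) (yn n)"
    and u: "\<And>j. u (Suc j) = step (\<phi> j (u j) y) y (u j)" "\<And>j. u j \<in> B"
    and \<phi>: "\<And>j. continuous (at (u j, y)) (\<lambda>p. \<phi> j (fst p) (snd p))"
    and start_eq: "\<And>n. ud n 0 = u 0"
  shows "((\<lambda>n. ud n k) \<longlongrightarrow> u k) G"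
proof (rule iterates_tendsto[where \<phi> = \<phi> and u = u and w = ud,
      OF tendsto_mono[OF G(1) data_tendsto[OF \<delta>]] u \<phi> start_eq])
  show "\<forall>\<^sub>F n in G. \<forall>j<k. ud n j \<in> B \<and> ud n (Suc j) = step (\<phi> j (ud n j) (yn n)) (yn n) (ud n j)"
    using G(2) by eventually_elim
      (auto simp: iterate lam simp del: mem_cball intro: noisy_iterate_in_ball)
qed

lemma stopping_index_solves:
  assumes \<delta>: "\<delta> \<longlonglongrightarrow> 0" and inf: "infinite {n. kn n = j}"
    and lim: "((\<lambda>n. ud n j) \<longlongrightarrow> v) (inf sequentially (principal {n. kn n = j}))" and v: "v \<in> B"
  shows "F v = y"
proof (rule solution_of_limit[OF _ lim v])
  let ?G = "inf sequentially (principal {n. kn n = j})"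
  show "?G \<noteq> bot" using inf by (simp add: inf_sequentially_principal_eq_bot_iff)
  show "\<forall>\<^sub>F n in ?G. ud n j \<in> B"
    unfolding eventually_inf_principal by (intro always_eventually allI impI noisy_iterate_in_ball) simp
  show "(yn \<longlongrightarrow> y) ?G" by (rule tendsto_mono[OF _ data_tendsto[OF \<delta>]]) simp
  have "\<forall>\<^sub>F n in ?G. norm (F (ud n j) - yn n) \<le> \<tau> * \<delta> n"
    unfolding eventually_inf_principal using stop by (intro always_eventually) auto
  then show "((\<lambda>n. F (ud n j) - yn n) \<longlongrightarrow> 0) ?G"
    by (rule Lim_null_comparison) (rule tendsto_mono[OF _ tendsto_mult_right_zero[OF \<delta>]], simp)
qed

end

lemma tendsto_at_stopping_index:
  fixes ud :: "nat \<Rightarrow> nat \<Rightarrow> 'a::metric_space"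
  assumes lim: "u \<longlonglongrightarrow> ubar"
    and stable: "\<And>k. ((\<lambda>n. ud n k) \<longlongrightarrow> u k) (inf sequentially (principal {n. k \<le> kn n}))"
    and fejer: "\<And>n j k. j \<le> k \<Longrightarrow> k \<le> kn n \<Longrightarrow> dist (ud n k) ubar \<le> dist (ud n j) ubar"
    and early: "\<And>j. infinite {n. kn n = j} \<Longrightarrow> u j = ubar"
  shows "(\<lambda>n. ud n (kn n)) \<longlonglongrightarrow> ubar"
proof (rule tendstoI)
  fix \<epsilon> :: real assume "\<epsilon> > 0"
  then obtain K where K: "dist (u K) ubar < \<epsilon> / 2"
    using lim[THEN tendstoD, of "\<epsilon> / 2"] by (auto dest: eventually_happens)
  have late: "\<forall>\<^sub>F n in sequentially. K \<le> kn n \<longrightarrow> dist (ud n K) (u K) < \<epsilon> / 2"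
    using stable[of K, THEN tendstoD, of "\<epsilon> / 2"] \<open>\<epsilon> > 0\<close> by (simp add: eventually_inf_principal)
  have early_j: "\<forall>\<^sub>F n in sequentially. kn n = j \<longrightarrow> dist (ud n j) ubar < \<epsilon>" for j
  proof (cases "finite {n. kn n = j}")
    case True
    then obtain N where "{n. kn n = j} \<subseteq> {..<N}" using finite_nat_bounded by blast
    then show ?thesis unfolding eventually_sequentially by (intro exI[of _ N]) auto
  next
    case False
    then have "\<forall>\<^sub>F n in inf sequentially (principal {n. j \<le> kn n}). dist (ud n j) ubar < \<epsilon>"
      using stable[of j, THEN tendstoD, of \<epsilon>] early \<open>\<epsilon> > 0\<close> by simp
    then show ?thesis by (auto simp: eventually_inf_principal elim: eventually_mono)
  qed
  have "\<forall>\<^sub>F n in sequentially. \<forall>j\<in>{..<K}. kn n = j \<longrightarrow> dist (ud n j) ubar < \<epsilon>"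
    using early_j by (intro eventually_ball_finite) auto
  with late show "\<forall>\<^sub>F n in sequentially. dist (ud n (kn n)) ubar < \<epsilon>"
  proof eventually_elim
    case (elim n)
    show ?case
    proof (cases "K \<le> kn n")
      case True
      have "dist (ud n (kn n)) ubar \<le> dist (ud n K) ubar" using fejer[OF True order_refl] .
      also have "\<dots> \<le> dist (ud n K) (u K) + dist (u K) ubar" by (rule dist_triangle)
      finally show ?thesis using elim(1) True K by linarith
    qed (use elim(2) in auto)
  qed
qed

theorem mainTheorem5:
  fixes F Ahat :: "'a::{real_inner,complete_space} \<Rightarrow> 'b::{real_inner,complete_space}"
    and F' Ahat' :: "'a \<Rightarrow> ('a \<Rightarrow>\<^sub>L 'b)"
    and y :: 'b and udag u0 ubar :: 'a
    and \<rho> \<nu> L_F L_A C_N C0_lam :: real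
    and \<phi> :: "nat \<Rightarrow> 'a \<Rightarrow> 'b \<Rightarrow> real"
    and u :: "nat \<Rightarrow> 'a"
    and \<delta> :: "nat \<Rightarrow> real" and yn :: "nat \<Rightarrow> 'b"
    and ud :: "nat \<Rightarrow> nat \<Rightarrow> 'a"
    and kn :: "nat \<Rightarrow> nat"
    and \<tau> C_lam :: real
  assumes sol: "F udag = y"
    and rho_pos: "\<rho> > 0"
    and balls: "cball udag \<rho> \<subseteq> cball u0 (2 * \<rho>)"
    and u0_in: "u0 \<in> cball udag \<rho>"
    and nu_pos: "\<nu> > 0"
    and tcc: "\<And>v w. v \<in> cball udag \<rho> \<Longrightarrow> w \<in> cball udag \<rho> \<Longrightarrow>
               norm (F v - F w - blinfun_apply (F' v) (v - w)) \<le> \<nu> * norm (F v - F w)"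
    and F_deriv: "\<And>v. v \<in> cball udag \<rho> \<Longrightarrow>
               (F has_derivative blinfun_apply (F' v)) (at v within cball udag \<rho>)"
    and A_deriv: "\<And>v. v \<in> cball udag \<rho> \<Longrightarrow>
               (Ahat has_derivative blinfun_apply (Ahat' v)) (at v within cball udag \<rho>)"
    and F'_cont: "continuous_on (cball udag \<rho>) F'"
    and A'_cont: "continuous_on (cball udag \<rho>) Ahat'"
    and F'_bound: "\<And>v. v \<in> cball udag \<rho> \<Longrightarrow> norm (F' v) \<le> L_F"
    and A'_bound: "\<And>v. v \<in> cball udag \<rho> \<Longrightarrow> norm (Ahat' v) \<le> L_A"
    and C_N_pos: "C_N > 0"
    and C_N_bound: "norm (Ahat udag - y) \<ge> C_N"
    and phi_nonneg: "\<And>k v z. \<phi> k v z \<ge> 0"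
    and u_0: "u 0 = u0"
    and u_Suc: "\<And>k. u (Suc k) = u k - adjoint (blinfun_apply (F' (u k))) (F (u k) - y)
                 - \<phi> k (u k) y *\<^sub>R adjoint (blinfun_apply (Ahat' (u k))) (Ahat (u k) - y)"
    and lam_bound1: "\<And>k. \<phi> k (u k) y * L_A * (L_A * \<rho> + norm (Ahat udag) + norm y) \<le> \<rho>"
    and lam_bound2: "\<And>k. \<phi> k (u k) y \<le> C0_lam * (norm (F (u k) - y))\<^sup>2"
    and const0: "1 - \<nu> - L_F\<^sup>2 - 2 * L_A * (L_A * \<rho> + norm (Ahat udag) + norm y) * C0_lam * \<rho> > 0"
    and u_lim: "u \<longlonglongrightarrow> ubar"
    and phi_cont: "\<And>k. continuous (at (u k, y)) (\<lambda>p. \<phi> k (fst p) (snd p))"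
    and delta_pos: "\<And>n. \<delta> n > 0"
    and delta_lim: "\<delta> \<longlonglongrightarrow> 0"
    and yn_close: "\<And>n. norm (yn n - y) \<le> \<delta> n"
    and ud_0: "\<And>n. ud n 0 = u0"
    and ud_Suc: "\<And>n k. ud n (Suc k) = ud n k
                 - adjoint (blinfun_apply (F' (ud n k))) (F (ud n k) - yn n)
                 - \<phi> k (ud n k) (yn n) *\<^sub>R adjoint (blinfun_apply (Ahat' (ud n k))) (Ahat (ud n k) - yn n)"
    and tau_pos: "\<tau> > 0"
    and C_tau: "1 - L_F\<^sup>2 - \<nu> - (1 + \<nu>) / \<tau> \<ge> 0"
    and C_lam_pos: "C_lam > 0"
    and noisy_lam1: "\<And>n k. k < kn n \<Longrightarrow>
          \<phi> k (ud n k) (yn n) * L_A * (L_A * \<rho> + norm (Ahat udag) + norm (yn n)) \<le> \<rho>"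
    and noisy_lam2: "\<And>n k. k < kn n \<Longrightarrow>
          \<phi> k (ud n k) (yn n) \<le> C_lam * (norm (F (ud n k) - yn n))\<^sup>2"
    and noisy_const: "\<And>n. (1 - L_F\<^sup>2 - \<nu> - (1 + \<nu>) / \<tau>)
          - 2 * L_A * (L_A * \<rho> + norm (Ahat udag) + norm (yn n)) * C_lam * \<rho> > 0"
    and stop: "\<And>n. norm (F (ud n (kn n)) - yn n) \<le> \<tau> * \<delta> n"
    and stop_first: "\<And>n k. k < kn n \<Longrightarrow> norm (F (ud n k) - yn n) > \<tau> * \<delta> n"
  shows "(\<lambda>n. ud n (kn n)) \<longlonglongrightarrow> ubar"
proof -
  interpret penalised_landweber F Ahat F' Ahat' udag \<rho> \<nu> L_F L_A
    using rho_pos nu_pos tcc F_deriv A_deriv F'_cont A'_cont F'_bound A'_bound by unfold_locales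
  have small: "\<nu> + L_F\<^sup>2 < 1"
    using C_tau_nonneg_consequences(1)[OF tau_pos] C_tau unfolding C_tau_def by simp
  interpret exact: exact_iteration F Ahat F' Ahat' udag \<rho> \<nu> L_F L_A y u "\<lambda>k. \<phi> k (u k) y" C0_lam
    using sol u0_in u_0 u_Suc phi_nonneg lam_bound1 lam_bound2 small const0
    by unfold_locales (simp_all add: step_def C_A_def algebra_simps)
  interpret noisy: noisy_iterations F Ahat F' Ahat' udag \<rho> \<nu> L_F L_A y yn \<delta> ud
      "\<lambda>n k. \<phi> k (ud n k) (yn n)" kn \<tau> C_lam
    using sol u0_in ud_0 ud_Suc phi_nonneg noisy_lam2 yn_close stop_first stop tau_pos C_tau noisy_const
    by unfold_locales (simp_all add: step_def C_A_def C_tau_def algebra_simps)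
  have stable: "((\<lambda>n. ud n k) \<longlongrightarrow> u k) (inf sequentially (principal S))"
    if "\<And>n. n \<in> S \<Longrightarrow> k \<le> kn n" for k S
    using that by (intro noisy.iterate_tendsto_exact_iterate[OF delta_lim, where \<phi> = \<phi>] exact.iterate
        exact.iterate_in_ball phi_cont) (auto simp: eventually_inf_principal ud_0 u_0)
  show ?thesis
  proof (rule tendsto_at_stopping_index[OF u_lim])
    show "((\<lambda>n. ud n k) \<longlongrightarrow> u k) (inf sequentially (principal {n. k \<le> kn n}))" for k
      by (rule stable) simp
    show "dist (ud n k) ubar \<le> dist (ud n j) ubar" if "j \<le> k" "k \<le> kn n" for n j k
      using noisy.noisy_iterate_fejer[OF exact.limit_in_ball[OF u_lim] exact.limit_solves[OF u_lim] that]
      by (simp add: dist_norm)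
    show "u j = ubar" if "infinite {n. kn n = j}" for j
      using noisy.stopping_index_solves[OF delta_lim that stable exact.iterate_in_ball]
        exact.solving_iterate_eq_limit[OF u_lim] by simp
  qed
qed

end
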